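(* Let $G$ be a graph, $k$ an integer, and $v$ a vertex of $G$. Suppose $(C_1,C_2)$ is a partition of $N_G(v)$ with $|C_1|\ge|C_2|$ such that (i) $C_1$ and $C_2$ are cliques in $G$, and (ii) letting $M$ be the set of pairs $\{c_1,c_2\}$ with $c_1\in C_1$, $c_2\in C_2$ and $\{c_1,c_2\}\notin E(G)$, every $c_1\in C_1$ is contained in precisely one element of $M$. Let $G'$ be obtained from $G$ by deleting $v$ and all vertices of $C_2$, and then, for every $\{c_1,c_2\}\in M$ with $c_1\in C_1$, $c_2\in C_2$, adding all edges between $c_1$ and the vertices of $N_G(c_2)$ that remain in $G'$. Then $G$ has a vertex cover of size $k$ if and only if $G'$ has a vertex cover of size $k-|C_2|$.
   Context: All graphs are finite, simple, undirected. $N_G(x)$ is the open neighborhood of $x$ in $G$. A clique is a set of pairwise adjacent vertices. A vertex cover is a set of vertices containing at least one endpoint of every edge; "has a vertex cover of size $k$" means has a vertex cover of size at most $k$. *)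

theory Defs
  imports Main
begin

definition simple_graph :: "'a set \<Rightarrow> ('a \<Rightarrow> 'a \<Rightarrow> bool) \<Rightarrow> bool" where
  "simple_graph V E \<longleftrightarrow> finite V \<and> (\<forall>x y. E x y \<longrightarrow> x \<in> V \<and> y \<in> V)
     \<and> (\<forall>x y. E x y \<longrightarrow> E y x) \<and> (\<forall>x. \<not> E x x)"

definition nbhd :: "'a set \<Rightarrow> ('a \<Rightarrow> 'a \<Rightarrow> bool) \<Rightarrow> 'a \<Rightarrow> 'a set" where
  "nbhd V E x = {y \<in> V. E x y}"

definition is_clique :: "('a \<Rightarrow> 'a \<Rightarrow> bool) \<Rightarrow> 'a set \<Rightarrow> bool" where
  "is_clique E C \<longleftrightarrow> (\<forall>x\<in>C. \<forall>y\<in>C. x \<noteq> y \<longrightarrow> E x y)"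

definition is_vertex_cover :: "'a set \<Rightarrow> ('a \<Rightarrow> 'a \<Rightarrow> bool) \<Rightarrow> 'a set \<Rightarrow> bool" where
  "is_vertex_cover V E S \<longleftrightarrow> S \<subseteq> V \<and> (\<forall>x y. E x y \<longrightarrow> x \<in> S \<or> y \<in> S)"

text \<open>"has a vertex cover of size k" = of size at most k; k is an integer.\<close>
definition has_vc :: "'a set \<Rightarrow> ('a \<Rightarrow> 'a \<Rightarrow> bool) \<Rightarrow> int \<Rightarrow> bool" where
  "has_vc V E k \<longleftrightarrow> (\<exists>S. is_vertex_cover V E S \<and> int (card S) \<le> k)"

definition nonedges_M :: "('a \<Rightarrow> 'a \<Rightarrow> bool) \<Rightarrow> 'a set \<Rightarrow> 'a set \<Rightarrow> 'a set set" where
  "nonedges_M E C1 C2 = {{c1, c2} | c1 c2. c1 \<in> C1 \<and> c2 \<in> C2 \<and> \<not> E c1 c2}"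

definition red_V :: "'a set \<Rightarrow> 'a \<Rightarrow> 'a set \<Rightarrow> 'a set" where
  "red_V V v C2 = V - {v} - C2"

definition added_edge :: "'a set \<Rightarrow> ('a \<Rightarrow> 'a \<Rightarrow> bool) \<Rightarrow> 'a \<Rightarrow> 'a set \<Rightarrow> 'a set \<Rightarrow> 'a \<Rightarrow> 'a \<Rightarrow> bool" where
  "added_edge V E v C1 C2 c1 u \<longleftrightarrow> (\<exists>c2. {c1, c2} \<in> nonedges_M E C1 C2 \<and> c1 \<in> C1 \<and> c2 \<in> C2
      \<and> u \<in> nbhd V E c2 \<and> u \<in> red_V V v C2)"

definition red_E :: "'a set \<Rightarrow> ('a \<Rightarrow> 'a \<Rightarrow> bool) \<Rightarrow> 'a \<Rightarrow> 'a set \<Rightarrow> 'a set \<Rightarrow> 'a \<Rightarrow> 'a \<Rightarrow> bool" where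
  "red_E V E v C1 C2 x y \<longleftrightarrow> x \<in> red_V V v C2 \<and> y \<in> red_V V v C2 \<and> x \<noteq> y \<and>
     (E x y \<or> added_edge V E v C1 C2 x y \<or> added_edge V E v C1 C2 y x)"

end

theory Submission
  imports Defs
begin

text \<open>
  Let \<open>S\<close> be a vertex cover of \<open>G\<close>. If \<open>v \<notin> S\<close>, then \<open>N(v) \<subseteq> S\<close>, and \<open>S - C\<^sub>2\<close> covers \<open>G'\<close>
  because every new edge has an endpoint in \<open>C\<^sub>1\<close>. If \<open>v \<in> S\<close>, then \<open>S\<close> misses at most one
  vertex of each of the cliques \<open>C\<^sub>1\<close>, \<open>C\<^sub>2\<close>. If it misses some \<open>c\<^sub>2 \<in> C\<^sub>2\<close>, every
  \<open>c\<^sub>1 \<in> C\<^sub>1 - S\<close> is non-adjacent to \<open>c\<^sub>2\<close>, so \<open>c\<^sub>2\<close> is the partner of \<open>c\<^sub>1\<close> (its unique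
  non-neighbour in \<open>C\<^sub>2\<close>), and the new edges at \<open>c\<^sub>1\<close> lead to neighbours of \<open>c\<^sub>2\<close>,
  which lie in \<open>S\<close>; so \<open>S - ({v} \<union> C\<^sub>2)\<close> covers \<open>G'\<close>.
  Otherwise the vertex of \<open>C\<^sub>1\<close> missed by \<open>S\<close> (if any) is traded for \<open>v\<close>.

  Conversely, let \<open>T\<close> be a vertex cover of \<open>G'\<close>. If \<open>C\<^sub>1 \<subseteq> T\<close>, then \<open>T \<union> C\<^sub>2\<close> covers \<open>G\<close>.
  Otherwise \<open>T\<close> misses some \<open>c\<^sub>1 \<in> C\<^sub>1\<close>; in \<open>G'\<close> it is adjacent to all remaining
  neighbours of its partner \<open>c\<^sub>2\<close>, so these lie in \<open>T\<close>, and \<open>T \<union> {v} \<union> (C\<^sub>2 - {c\<^sub>2})\<close>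
  covers \<open>G\<close>.
\<close>

lemma card_eq_1_iff_ex1: "card A = 1 \<longleftrightarrow> (\<exists>!x. x \<in> A)"
  by (auto simp: card_1_singleton_iff)

lemma nonedges_M_containing:
  assumes "c1 \<in> C1" "C1 \<inter> C2 = {}"
  shows "{e \<in> nonedges_M E C1 C2. c1 \<in> e} = (\<lambda>c2. {c1, c2}) ` {c2 \<in> C2. \<not> E c1 c2}"
  using assms unfolding nonedges_M_def by blast

lemma card_nonedges_M_containing:
  assumes "c1 \<in> C1" "C1 \<inter> C2 = {}"
  shows "card {e \<in> nonedges_M E C1 C2. c1 \<in> e} = card {c2 \<in> C2. \<not> E c1 c2}"
  unfolding nonedges_M_containing[OF assms]
  by (rule card_image) (auto simp: inj_on_def doubleton_eq_iff)

lemma card_nonedges_M_containing_eq_1_iff: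
  assumes "c1 \<in> C1" "C1 \<inter> C2 = {}"
  shows "card {e \<in> nonedges_M E C1 C2. c1 \<in> e} = 1 \<longleftrightarrow> (\<exists>!c2\<in>C2. \<not> E c1 c2)"
  unfolding card_nonedges_M_containing[OF assms] card_eq_1_iff_ex1 by simp

lemma is_vertex_coverD:
  assumes "is_vertex_cover V E S"
  shows "S \<subseteq> V" and "E x y \<Longrightarrow> x \<in> S \<or> y \<in> S"
  using assms unfolding is_vertex_cover_def by blast+

lemma vertex_cover_misses_clique_at_most_once:
  assumes "is_clique E C" "is_vertex_cover V E S" "x \<in> C - S" "y \<in> C - S"
  shows "x = y"
  using assms unfolding is_clique_def is_vertex_cover_def by blast

locale nbhd_fold =
  fixes V :: "'a set" and E :: "'a \<Rightarrow> 'a \<Rightarrow> bool" and v :: 'a and C1 C2 :: "'a set"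
  assumes graph: "simple_graph V E"
    and v_in_V: "v \<in> V"
    and nbhd_v: "C1 \<union> C2 = nbhd V E v"
    and disjoint: "C1 \<inter> C2 = {}"
    and clique_C1: "is_clique E C1"
    and clique_C2: "is_clique E C2"
    and unique_partner: "\<And>c1. c1 \<in> C1 \<Longrightarrow> \<exists>!c2\<in>C2. \<not> E c1 c2"
begin

lemma finite_V: "finite V"
  and edge_in_V: "E x y \<Longrightarrow> x \<in> V \<and> y \<in> V"
  and edge_sym: "E x y \<Longrightarrow> E y x"
  and edge_irrefl: "\<not> E x x"
  using graph unfolding simple_graph_def by blast+

lemma adjacent_v_iff: "E v x \<longleftrightarrow> x \<in> C1 \<union> C2"
  using nbhd_v edge_in_V unfolding nbhd_def by blast

lemma C1_subset_V: "C1 \<subseteq> V" and C2_subset_V: "C2 \<subseteq> V"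
  using adjacent_v_iff edge_in_V by blast+

lemma finite_C1: "finite C1" and finite_C2: "finite C2"
  using C1_subset_V C2_subset_V finite_V finite_subset by blast+

lemma v_notin_C1: "v \<notin> C1" and v_notin_C2: "v \<notin> C2"
  using adjacent_v_iff edge_irrefl by blast+

abbreviation V' :: "'a set" where "V' \<equiv> red_V V v C2"
abbreviation E' :: "'a \<Rightarrow> 'a \<Rightarrow> bool" where "E' \<equiv> red_E V E v C1 C2"

lemma in_V'_iff: "x \<in> V' \<longleftrightarrow> x \<in> V \<and> x \<notin> insert v C2"
  unfolding red_V_def by blast

lemma C1_subset_V': "C1 \<subseteq> V'"
  using C1_subset_V v_notin_C1 disjoint in_V'_iff by blast

definition partner :: "'a \<Rightarrow> 'a" where
  "partner c1 = (THE c2. c2 \<in> C2 \<and> \<not> E c1 c2)"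

lemma partner_in_C2: "c1 \<in> C1 \<Longrightarrow> partner c1 \<in> C2"
  and not_adjacent_partner: "c1 \<in> C1 \<Longrightarrow> \<not> E c1 (partner c1)"
  using theI'[OF unique_partner] unfolding partner_def by blast+

lemma partner_eqI: "c1 \<in> C1 \<Longrightarrow> c2 \<in> C2 \<Longrightarrow> \<not> E c1 c2 \<Longrightarrow> partner c1 = c2"
  using unique_partner partner_in_C2 not_adjacent_partner by blast

lemma added_edge_iff: "added_edge V E v C1 C2 x u \<longleftrightarrow> x \<in> C1 \<and> u \<in> V' \<and> E (partner x) u"
proof
  assume "added_edge V E v C1 C2 x u"
  then obtain c2 a b where ab: "{x, c2} = {a, b}" "a \<in> C1" "b \<in> C2" "\<not> E a b"
    and "x \<in> C1" "c2 \<in> C2" "E c2 u" "u \<in> V'"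
    unfolding added_edge_def nonedges_M_def nbhd_def by blast
  moreover have "x = a \<and> c2 = b \<or> x = b \<and> c2 = a"
    using ab(1) by (simp add: doubleton_eq_iff)
  ultimately show "x \<in> C1 \<and> u \<in> V' \<and> E (partner x) u"
    using disjoint partner_eqI by blast
next
  assume x: "x \<in> C1 \<and> u \<in> V' \<and> E (partner x) u"
  then have "{x, partner x} \<in> nonedges_M E C1 C2"
    unfolding nonedges_M_def using partner_in_C2 not_adjacent_partner by blast
  then show "added_edge V E v C1 C2 x u"
    unfolding added_edge_def nbhd_def using x partner_in_C2 edge_in_V by blast
qed

lemma red_E_iff:
  "E' x y \<longleftrightarrow> x \<in> V' \<and> y \<in> V' \<and>
     (E x y \<or> x \<in> C1 \<and> E (partner x) y \<or> y \<in> C1 \<and> E (partner y) x)"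
  unfolding red_E_def added_edge_iff
  using edge_irrefl edge_sym not_adjacent_partner by blast

lemma is_vertex_cover_red_iff:
  "is_vertex_cover V' E' T \<longleftrightarrow> T \<subseteq> V' \<and>
     (\<forall>x\<in>V'. \<forall>y\<in>V'. E x y \<longrightarrow> x \<in> T \<or> y \<in> T) \<and>
     (\<forall>c1\<in>C1. \<forall>u\<in>V'. E (partner c1) u \<longrightarrow> c1 \<in> T \<or> u \<in> T)"
  unfolding is_vertex_cover_def red_E_iff using C1_subset_V' by blast

lemma card_split_red_V:
  assumes "S \<subseteq> V"
  shows "card S = card (S \<inter> V') + card (S \<inter> insert v C2)"
proof -
  have "S - V' = S \<inter> insert v C2" using assms in_V'_iff by blast
  then show ?thesis using card_Int_Diff[of S V'] finite_subset[OF assms finite_V] by simp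
qed

lemma red_cover_of_cover_avoiding_v:
  assumes S: "is_vertex_cover V E S" and "v \<notin> S"
  shows "\<exists>T. is_vertex_cover V' E' T \<and> card T + card C2 \<le> card S"
proof -
  have "C1 \<union> C2 \<subseteq> S"
    using is_vertex_coverD(2)[OF S] \<open>v \<notin> S\<close> adjacent_v_iff by blast
  then have "card (S \<inter> insert v C2) = card C2"
    using \<open>v \<notin> S\<close> by (simp add: Int_absorb1)
  moreover have "is_vertex_cover V' E' (S \<inter> V')"
    unfolding is_vertex_cover_red_iff
    using is_vertex_coverD(2)[OF S] \<open>C1 \<union> C2 \<subseteq> S\<close> C1_subset_V' by auto
  ultimately show ?thesis
    using card_split_red_V[OF is_vertex_coverD(1)[OF S]] by (intro exI[of _ "S \<inter> V'"]) simp
qed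

lemma red_cover_of_cover_containing_v_C2:
  assumes S: "is_vertex_cover V E S" and "v \<in> S" "C2 \<subseteq> S"
  shows "\<exists>T. is_vertex_cover V' E' T \<and> card T + card C2 \<le> card S"
proof -
  define T where "T = (S \<inter> V') \<union> (C1 - S)"
  have "card (C1 - S) \<le> 1"
    using vertex_cover_misses_clique_at_most_once[OF clique_C1 S] finite_C1
    by (simp add: card_le_Suc0_iff_eq)
  then have "card T \<le> card (S \<inter> V') + 1"
    unfolding T_def using card_Un_le[of "S \<inter> V'" "C1 - S"] by linarith
  moreover have "card (S \<inter> insert v C2) = card C2 + 1"
    using \<open>v \<in> S\<close> \<open>C2 \<subseteq> S\<close> v_notin_C2 finite_C2 by (simp add: Int_absorb1)
  moreover have "is_vertex_cover V' E' T"
    unfolding is_vertex_cover_red_iff T_def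
    using is_vertex_coverD(2)[OF S] C1_subset_V' by auto
  ultimately show ?thesis
    using card_split_red_V[OF is_vertex_coverD(1)[OF S]] by (intro exI[of _ T]) simp
qed

lemma red_cover_of_cover_missing_C2_vertex:
  assumes S: "is_vertex_cover V E S" and "v \<in> S" "b \<in> C2" "b \<notin> S"
  shows "\<exists>T. is_vertex_cover V' E' T \<and> card T + card C2 \<le> card S"
proof -
  have "insert v (C2 - {b}) \<subseteq> S \<inter> insert v C2"
    using vertex_cover_misses_clique_at_most_once[OF clique_C2 S] assms(2-4) by blast
  then have "card (insert v (C2 - {b})) \<le> card (S \<inter> insert v C2)"
    using finite_C2 by (intro card_mono) auto
  moreover have "card (insert v (C2 - {b})) = card C2"
  proof -
    have "card C2 > 0" using \<open>b \<in> C2\<close> finite_C2 card_gt_0_iff by blast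
    then show ?thesis using v_notin_C2 \<open>b \<in> C2\<close> finite_C2 by (simp add: card_Diff_singleton)
  qed
  moreover have "c1 \<in> S \<or> u \<in> S" if "c1 \<in> C1" "E (partner c1) u" for c1 u
  proof (rule ccontr)
    assume "\<not> (c1 \<in> S \<or> u \<in> S)"
    then have "\<not> E c1 b" using is_vertex_coverD(2)[OF S] \<open>b \<notin> S\<close> by blast
    then have "partner c1 = b" using partner_eqI \<open>c1 \<in> C1\<close> \<open>b \<in> C2\<close> by blast
    then show False using is_vertex_coverD(2)[OF S] \<open>b \<notin> S\<close> that \<open>\<not> (c1 \<in> S \<or> u \<in> S)\<close>
      by blast
  qed
  then have "is_vertex_cover V' E' (S \<inter> V')"
    unfolding is_vertex_cover_red_iff
    using is_vertex_coverD(2)[OF S] C1_subset_V' by auto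
  ultimately show ?thesis
    using card_split_red_V[OF is_vertex_coverD(1)[OF S]] by (intro exI[of _ "S \<inter> V'"]) simp
qed

lemma red_cover_of_cover:
  assumes "is_vertex_cover V E S"
  shows "\<exists>T. is_vertex_cover V' E' T \<and> card T + card C2 \<le> card S"
  using red_cover_of_cover_avoiding_v red_cover_of_cover_containing_v_C2
    red_cover_of_cover_missing_C2_vertex assms by blast

lemma is_vertex_cover_extend_red_cover:
  assumes T: "is_vertex_cover V' E' T" and "T \<subseteq> S" "S \<subseteq> V"
    and around_v_C2: "\<And>x y. E x y \<Longrightarrow> x \<in> insert v C2 \<Longrightarrow> x \<in> S \<or> y \<in> S"
  shows "is_vertex_cover V E S"
  unfolding is_vertex_cover_def
proof (intro conjI allI impI \<open>S \<subseteq> V\<close>)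
  fix x y assume "E x y"
  show "x \<in> S \<or> y \<in> S"
  proof (cases "x \<in> insert v C2 \<or> y \<in> insert v C2")
    case True
    then show ?thesis using around_v_C2 \<open>E x y\<close> edge_sym by blast
  next
    case False
    then have "x \<in> V'" "y \<in> V'" using edge_in_V[OF \<open>E x y\<close>] in_V'_iff by blast+
    then show ?thesis
      using T \<open>E x y\<close> \<open>T \<subseteq> S\<close> unfolding is_vertex_cover_red_iff by blast
  qed
qed

lemma cover_of_red_cover_containing_C1:
  assumes T: "is_vertex_cover V' E' T" and "C1 \<subseteq> T"
  shows "\<exists>S. is_vertex_cover V E S \<and> card S \<le> card T + card C2"
proof -
  have "T \<subseteq> V'" using is_vertex_coverD(1)[OF T] .
  then have "is_vertex_cover V E (T \<union> C2)"
    using \<open>C1 \<subseteq> T\<close> adjacent_v_iff C2_subset_V in_V'_iff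
    by (intro is_vertex_cover_extend_red_cover[OF T]) auto
  then show ?thesis using card_Un_le by blast
qed

lemma cover_of_red_cover_missing_C1_vertex:
  assumes T: "is_vertex_cover V' E' T" and "c1 \<in> C1" "c1 \<notin> T"
  shows "\<exists>S. is_vertex_cover V E S \<and> card S \<le> card T + card C2"
proof -
  define c2 where "c2 = partner c1"
  have "c2 \<in> C2" unfolding c2_def using partner_in_C2 \<open>c1 \<in> C1\<close> .
  define S where "S = T \<union> insert v (C2 - {c2})"
  have "y \<in> S" if "E c2 y" for y
  proof (cases "y \<in> V'")
    case True
    have "\<forall>u\<in>V'. E (partner c1) u \<longrightarrow> c1 \<in> T \<or> u \<in> T"
      using T \<open>c1 \<in> C1\<close> unfolding is_vertex_cover_red_iff by blast
    then have "y \<in> T" using True \<open>E c2 y\<close> \<open>c1 \<notin> T\<close> unfolding c2_def by blast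
    then show ?thesis unfolding S_def by blast
  next
    case False
    then have "y \<in> insert v C2" using edge_in_V[OF \<open>E c2 y\<close>] in_V'_iff by blast
    moreover have "y \<noteq> c2" using \<open>E c2 y\<close> edge_irrefl by blast
    ultimately show ?thesis unfolding S_def by blast
  qed
  then have "is_vertex_cover V E S"
    using is_vertex_coverD(1)[OF T] v_in_V C2_subset_V in_V'_iff
    by (intro is_vertex_cover_extend_red_cover[OF T]) (auto simp: S_def)
  moreover have "card S \<le> card T + card C2"
  proof -
    have "card C2 > 0" using \<open>c2 \<in> C2\<close> finite_C2 card_gt_0_iff by blast
    then have "card (insert v (C2 - {c2})) \<le> card C2"
      using \<open>c2 \<in> C2\<close> finite_C2 by (simp add: card_insert_if card_Diff_singleton)
    then show ?thesis unfolding S_def using card_Un_le[of T "insert v (C2 - {c2})"] by linarith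
  qed
  ultimately show ?thesis by blast
qed

lemma cover_of_red_cover:
  assumes "is_vertex_cover V' E' T"
  shows "\<exists>S. is_vertex_cover V E S \<and> card S \<le> card T + card C2"
  using cover_of_red_cover_containing_C1 cover_of_red_cover_missing_C1_vertex assms by blast

end

theorem proposition5:
  fixes V :: "'a set" and E :: "'a \<Rightarrow> 'a \<Rightarrow> bool" and v :: 'a
    and C1 C2 :: "'a set" and k :: int
  assumes "simple_graph V E"
    and "v \<in> V"
    and "C1 \<union> C2 = nbhd V E v" and "C1 \<inter> C2 = {}"
    and "card C1 \<ge> card C2"
    and "is_clique E C1" and "is_clique E C2"
    and "\<forall>c1\<in>C1. card {e \<in> nonedges_M E C1 C2. c1 \<in> e} = 1"
  shows "has_vc V E k \<longleftrightarrow>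
         has_vc (red_V V v C2) (red_E V E v C1 C2) (k - int (card C2))"
proof -
  have "\<exists>!c2\<in>C2. \<not> E c1 c2" if "c1 \<in> C1" for c1
    using assms(8) card_nonedges_M_containing_eq_1_iff[OF that assms(4)] that by blast
  then interpret nbhd_fold V E v C1 C2
    using assms(1-4,6,7) by unfold_locales
  show ?thesis
  proof
    assume "has_vc V E k"
    then obtain S where "is_vertex_cover V E S" "int (card S) \<le> k"
      unfolding has_vc_def by blast
    moreover obtain T where "is_vertex_cover V' E' T" "card T + card C2 \<le> card S"
      using red_cover_of_cover[OF \<open>is_vertex_cover V E S\<close>] by blast
    ultimately show "has_vc V' E' (k - int (card C2))"
      unfolding has_vc_def by (intro exI[of _ T]) simp
  next
    assume "has_vc V' E' (k - int (card C2))"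
    then obtain T where "is_vertex_cover V' E' T" "int (card T) \<le> k - int (card C2)"
      unfolding has_vc_def by blast
    moreover obtain S where "is_vertex_cover V E S" "card S \<le> card T + card C2"
      using cover_of_red_cover[OF \<open>is_vertex_cover V' E' T\<close>] by blast
    ultimately show "has_vc V E k"
      unfolding has_vc_def by (intro exI[of _ S]) simp
  qed
qed

end
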